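(* For every countable $S\subseteq(0;1)$ there is a solid open set $A\subseteq2^\omega$, and also a solid closed set $A\subseteq 2^\omega$, such that $\operatorname{ran}\mathcal{D}_A=S\cup\{0,1\}$ and for every $r\in S$ there is exactly one $z\in2^\omega$ with $\mathcal{D}_A(z)=r$.
   Context: $2^{\omega}$ is the Cantor space; $N_s=\{x\in2^\omega:s\subset x\}$; $\mu$ is the coin-tossing measure, $\mu(N_s)=2^{-\mathrm{lh}(s)}$. For measurable $A$, $\mathcal{D}_A(z)=\lim_n\mu(A\cap N_{z\restriction n})/\mu(N_{z\restriction n})$ when the limit exists; $\operatorname{ran}\mathcal{D}_A$ is the set of values attained where defined. $A$ is solid if $\mathcal{D}_A(z)$ exists for every $z\in2^\omega$. *)

theory Defs
  imports "HOL-Analysis.Analysis" "HOL-Probability.Probability"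
begin

text \<open>Cantor space 2^omega is the type nat \<Rightarrow> bool, carrying the product topology
  (library instance for functions into the discrete space bool).\<close>

definition coin_measure :: "(nat \<Rightarrow> bool) measure" where
  "coin_measure = Pi\<^sub>M UNIV (\<lambda>_. measure_pmf (bernoulli_pmf (1/2)))"

definition cyl :: "(nat \<Rightarrow> bool) \<Rightarrow> nat \<Rightarrow> (nat \<Rightarrow> bool) set" where
  "cyl z n = {x. \<forall>i<n. x i = z i}"

definition density_at :: "(nat \<Rightarrow> bool) set \<Rightarrow> (nat \<Rightarrow> bool) \<Rightarrow> real \<Rightarrow> bool" where
  "density_at A z d \<longleftrightarrow>
     ((\<lambda>n. measure coin_measure (A \<inter> cyl z n) / measure coin_measure (cyl z n)) \<longlonglongrightarrow> d)"

definition solid :: "(nat \<Rightarrow> bool) set \<Rightarrow> bool" where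
  "solid A \<longleftrightarrow> (\<forall>z. \<exists>d. density_at A z d)"

definition density_range :: "(nat \<Rightarrow> bool) set \<Rightarrow> real set" where
  "density_range A = {d. \<exists>z. density_at A z d}"

end

theory Submission
  imports Defs
begin

text \<open>
  Enumerate S injectively as r \<mapsto> k and let d_j be the binary digits of r. The open set is the
  union of the cylinder [01] (so that the value 1 is attained even for empty S) and of the
  cylinders [1^k 0^(k+2+n) 1 0^j 1] with j < n and d_j = 1.

  The cylinder of z at level n is the disjoint union of the cylinder of z and that of its sibling
  at level n+1, so the density ratio of z at level n is the mean of the sibling's ratio and the
  ratio of z one level down; hence z has density d as soon as the sibling ratios tend to d.
  At 1^k 0^\<omega> the sibling at level 2k+3+n meets the set in the cylinders with j < n, of relative
  measure sum_(j<n) d_j 2^(-j-1) \<longrightarrow> r. At 1^\<omega> the sibling at level m+1 meets it only inside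
  [1^m 0^(m+2)], of relative measure 2^(-m-1); this is what the k+2 zeros are for. Every other
  point lies in the open set or outside its closure, so its density is 1 or 0. The closed set is
  the complement of the open set built for {1 - r | r \<in> S}.
\<close>

lemma prob_space_coin_measure: "prob_space coin_measure"
  unfolding coin_measure_def by (rule prob_space_PiM) (simp add: prob_space_measure_pmf)

interpretation coin: prob_space coin_measure
  by (rule prob_space_coin_measure)

instance bool :: second_countable_topology
proof
  have "open = generate_topology (UNIV :: bool set set)"
    by (intro ext iffI generate_topology.Basis) (simp_all add: discrete_topology_class.open_discrete)
  then show "\<exists>B::bool set set. countable B \<and> open = generate_topology B"
    by blast
qed

lemma sets_coin_measure: "sets coin_measure = sets borel"
proof -
  have "sets coin_measure = sets (Pi\<^sub>M UNIV (\<lambda>_::nat. borel :: bool measure))"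
    unfolding coin_measure_def by (intro sets_PiM_cong) (auto simp: sets_borel_eq_count_space)
  also have "\<dots> = sets borel"
    by (rule sets_PiM_equal_borel)
  finally show ?thesis .
qed

lemma open_in_sets_coin_measure: "open A \<Longrightarrow> A \<in> sets coin_measure"
  by (simp add: sets_coin_measure)

lemma cyl_cong: "(\<And>i. i < n \<Longrightarrow> x i = z i) \<Longrightarrow> cyl x n = cyl z n"
  by (simp add: cyl_def)

lemma cyl_antimono: "m \<le> n \<Longrightarrow> cyl z n \<subseteq> cyl z m"
  by (auto simp: cyl_def)

lemma cyl_Suc: "cyl z n = cyl z (Suc n) \<union> cyl (z(n := \<not> z n)) (Suc n)"
  by (auto simp: cyl_def less_Suc_eq)

lemma cyl_Suc_disjoint: "cyl z (Suc n) \<inter> cyl (z(n := \<not> z n)) (Suc n) = {}"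
  by (auto simp: cyl_def)

lemma open_cyl: "open (cyl z n)"
proof -
  have "open {x::nat \<Rightarrow> bool. \<forall>i\<in>{..<n}. x (id i) \<in> {z i}}"
    by (rule product_topology_basis') (auto intro: discrete_topology_class.open_discrete)
  moreover have "{x::nat \<Rightarrow> bool. \<forall>i\<in>{..<n}. x (id i) \<in> {z i}} = cyl z n"
    by (auto simp: cyl_def)
  ultimately show ?thesis by simp
qed

lemma measure_cyl: "measure coin_measure (cyl z n) = (1/2)^n"
proof -
  let ?B = "measure_pmf (bernoulli_pmf (1/2))"
  have cyl_emb: "cyl z n = prod_emb UNIV (\<lambda>_. ?B) {..<n} (Pi\<^sub>E {..<n} (\<lambda>i. {z i}))"
    by (auto simp: prod_emb_iff cyl_def restrict_PiE_iff)
  have "emeasure coin_measure (cyl z n) = (\<Prod>i<n. emeasure ?B {z i})"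
    unfolding coin_measure_def cyl_emb
    by (rule emeasure_PiM_emb) (auto simp: prob_space_measure_pmf)
  also have "\<dots> = (\<Prod>i<n. ennreal (1/2))"
    by (simp add: emeasure_pmf_single)
  also have "\<dots> = ennreal ((1/2)^n)"
    by (simp only: prod_constant card_lessThan ennreal_power)
  finally show ?thesis by (simp add: measure_def)
qed

lemma open_contains_cyl:
  assumes "open A" "z \<in> A"
  obtains m where "cyl z m \<subseteq> A"
proof -
  have "openin (product_topology (\<lambda>_. euclidean) UNIV) A"
    using assms(1) by (simp add: euclidean_product_topology)
  from product_topology_open_contains_basis[OF this assms(2)]
  obtain X where X: "z \<in> Pi\<^sub>E UNIV X" "finite {i. X i \<noteq> UNIV}" "Pi\<^sub>E UNIV X \<subseteq> A"
    by auto
  obtain m where "{i. X i \<noteq> UNIV} \<subseteq> {..<m}"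
    using finite_nat_bounded[OF X(2)] by blast
  then have m: "\<And>i. X i \<noteq> UNIV \<Longrightarrow> i < m"
    by auto
  have "cyl z m \<subseteq> Pi\<^sub>E UNIV X"
  proof
    fix y assume "y \<in> cyl z m"
    then have "y i \<in> X i" for i
      using m[of i] X(1) by (cases "X i = UNIV") (auto simp: cyl_def)
    then show "y \<in> Pi\<^sub>E UNIV X" by auto
  qed
  with X(3) show thesis
    by (intro that) (rule order_trans)
qed

lemma closure_imp_cyl_Int_nonempty: "z \<in> closure A \<Longrightarrow> cyl z m \<inter> A \<noteq> {}"
  using open_cyl[of z m] by (auto simp: closure_iff_nhds_not_empty cyl_def)

definition density_ratio :: "(nat \<Rightarrow> bool) set \<Rightarrow> (nat \<Rightarrow> bool) \<Rightarrow> nat \<Rightarrow> real" where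
  "density_ratio A z n = measure coin_measure (A \<inter> cyl z n) / measure coin_measure (cyl z n)"

lemma density_at_iff_ratio: "density_at A z d \<longleftrightarrow> density_ratio A z \<longlonglongrightarrow> d"
  by (simp add: density_at_def density_ratio_def[abs_def])

lemma density_at_unique: "density_at A z d \<Longrightarrow> density_at A z d' \<Longrightarrow> d = d'"
  unfolding density_at_def using LIMSEQ_unique by blast

lemma density_ratio_bounds: "0 \<le> density_ratio A z n" "density_ratio A z n \<le> 1"
proof -
  have "measure coin_measure (A \<inter> cyl z n) \<le> measure coin_measure (cyl z n)"
    by (rule coin.finite_measure_mono) (auto intro: open_in_sets_coin_measure open_cyl)
  then show "0 \<le> density_ratio A z n" "density_ratio A z n \<le> 1"
    by (simp_all add: density_ratio_def measure_cyl)
qed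

lemma density_at_interior:
  assumes "z \<in> interior A" shows "density_at A z 1"
proof -
  obtain m where "cyl z m \<subseteq> interior A"
    using open_contains_cyl[OF open_interior assms] .
  then have "A \<inter> cyl z n = cyl z n" if "m \<le> n" for n
    using cyl_antimono[OF that, of z] interior_subset[of A] by blast
  then have "density_ratio A z n = 1" if "m \<le> n" for n
    using that by (simp add: density_ratio_def measure_cyl)
  then have "\<forall>\<^sub>F n in sequentially. density_ratio A z n = 1"
    by (auto simp: eventually_sequentially)
  then show ?thesis
    unfolding density_at_iff_ratio by (rule tendsto_eventually)
qed

lemma density_at_exterior:
  assumes "z \<notin> closure A" shows "density_at A z 0"
proof -
  obtain m where "cyl z m \<subseteq> - closure A"
    using open_contains_cyl[of "- closure A" z] assms by auto
  then have "A \<inter> cyl z n = {}" if "m \<le> n" for n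
    using cyl_antimono[OF that, of z] closure_subset[of A] by blast
  then have "density_ratio A z n = 0" if "m \<le> n" for n
    using that by (simp add: density_ratio_def)
  then have "\<forall>\<^sub>F n in sequentially. density_ratio A z n = 0"
    by (auto simp: eventually_sequentially)
  then show ?thesis
    unfolding density_at_iff_ratio by (rule tendsto_eventually)
qed

lemma density_at_Compl:
  assumes "A \<in> sets coin_measure"
  shows "density_at (- A) z d \<longleftrightarrow> density_at A z (1 - d)"
proof -
  have "measure coin_measure (- A \<inter> cyl z n) = measure coin_measure (cyl z n) - measure coin_measure (A \<inter> cyl z n)" for n
    using coin.finite_measure_Diff'[of "cyl z n" A] assms open_in_sets_coin_measure[OF open_cyl]
    by (simp add: Diff_eq Int_commute)
  then have "density_ratio (- A) z n = 1 - density_ratio A z n" for n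
    by (simp add: density_ratio_def measure_cyl diff_divide_distrib)
  then have ratio: "density_ratio (- A) z = (\<lambda>n. 1 - density_ratio A z n)"
    by auto
  show ?thesis
    unfolding density_at_iff_ratio ratio
  proof
    assume "(\<lambda>n. 1 - density_ratio A z n) \<longlonglongrightarrow> d"
    then have "(\<lambda>n. 1 - (1 - density_ratio A z n)) \<longlonglongrightarrow> 1 - d"
      by (intro tendsto_diff tendsto_const)
    then show "density_ratio A z \<longlonglongrightarrow> 1 - d" by simp
  next
    assume "density_ratio A z \<longlonglongrightarrow> 1 - d"
    then have "(\<lambda>n. 1 - density_ratio A z n) \<longlonglongrightarrow> 1 - (1 - d)"
      by (intro tendsto_diff tendsto_const)
    then show "(\<lambda>n. 1 - density_ratio A z n) \<longlonglongrightarrow> d" by simp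
  qed
qed

lemma density_ratio_Suc:
  assumes "A \<in> sets coin_measure"
  shows "density_ratio A z n
           = (density_ratio A (z(n := \<not> z n)) (Suc n) + density_ratio A z (Suc n)) / 2"
proof -
  let ?z' = "z(n := \<not> z n)"
  have "A \<inter> cyl z n = (A \<inter> cyl ?z' (Suc n)) \<union> (A \<inter> cyl z (Suc n))"
    using cyl_Suc[of z n] by blast
  moreover have "(A \<inter> cyl ?z' (Suc n)) \<inter> (A \<inter> cyl z (Suc n)) = {}"
    using cyl_Suc_disjoint[of z n] by blast
  ultimately have "measure coin_measure (A \<inter> cyl z n)
      = measure coin_measure (A \<inter> cyl ?z' (Suc n)) + measure coin_measure (A \<inter> cyl z (Suc n))"
    using assms open_in_sets_coin_measure[OF open_cyl]
    by (simp add: coin.finite_measure_Union)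
  then show ?thesis
    by (simp add: density_ratio_def measure_cyl field_simps)
qed

lemma LIMSEQ_halving_recurrence:
  fixes f s :: "nat \<Rightarrow> real"
  assumes bounded: "\<And>n. \<bar>f n\<bar> \<le> B"
    and recurrence: "\<And>n. f n = (s n + f (Suc n)) / 2"
    and lim: "s \<longlonglongrightarrow> d"
  shows "f \<longlonglongrightarrow> d"
proof (rule LIMSEQ_I)
  fix \<epsilon> :: real
  assume "0 < \<epsilon>"
  then obtain M where M: "\<And>n. M \<le> n \<Longrightarrow> \<bar>s n - d\<bar> < \<epsilon> / 2"
    using LIMSEQ_D[OF lim, of "\<epsilon> / 2"] by auto
  define C where "C = B + \<bar>d\<bar>"
  have iterate: "\<bar>f n - d\<bar> \<le> \<epsilon> / 2 + C * (1/2)^N" if "M \<le> n" for N n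
    using that
  proof (induction N arbitrary: n)
    case 0
    then show ?case
      using abs_triangle_ineq4[of "f n" d] bounded[of n] \<open>0 < \<epsilon>\<close> by (simp add: C_def)
  next
    case (Suc N)
    have "f n - d = ((s n - d) + (f (Suc n) - d)) / 2"
      using recurrence[of n] by (simp add: field_simps)
    then have "\<bar>f n - d\<bar> = \<bar>(s n - d) + (f (Suc n) - d)\<bar> / 2"
      by (metis abs_divide abs_numeral)
    also have "\<dots> \<le> (\<bar>s n - d\<bar> + \<bar>f (Suc n) - d\<bar>) / 2"
      by (simp add: abs_triangle_ineq divide_right_mono)
    also have "\<dots> \<le> (\<epsilon> / 2 + (\<epsilon> / 2 + C * (1/2)^N)) / 2"
      using M[of n] Suc.IH[of "Suc n"] Suc.prems by simp
    also have "\<dots> = \<epsilon> / 2 + C * (1/2)^Suc N"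
      by simp
    finally show ?case .
  qed
  have "(\<lambda>N. \<epsilon> / 2 + C * (1/2)^N) \<longlonglongrightarrow> \<epsilon> / 2 + C * 0"
    by (intro tendsto_add tendsto_mult tendsto_const LIMSEQ_power_zero) simp
  then have "\<bar>f n - d\<bar> \<le> \<epsilon> / 2" if "M \<le> n" for n
    using iterate[OF that] by (intro LIMSEQ_le_const) auto
  then show "\<exists>M. \<forall>n\<ge>M. norm (f n - d) < \<epsilon>"
    using \<open>0 < \<epsilon>\<close> by force
qed

lemma density_at_of_siblings:
  assumes "A \<in> sets coin_measure"
    and "(\<lambda>n. density_ratio A (z(n := \<not> z n)) (Suc n)) \<longlonglongrightarrow> d"
  shows "density_at A z d"
  unfolding density_at_iff_ratio
proof (rule LIMSEQ_halving_recurrence[OF _ density_ratio_Suc[OF assms(1)] assms(2)])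
  show "\<bar>density_ratio A z n\<bar> \<le> 1" for n
    using density_ratio_bounds[of A z n] by simp
qed

primrec dyadic_approx :: "real \<Rightarrow> nat \<Rightarrow> real" where
  "dyadic_approx r 0 = 0"
| "dyadic_approx r (Suc n) =
     (if dyadic_approx r n + (1/2)^Suc n \<le> r then dyadic_approx r n + (1/2)^Suc n
      else dyadic_approx r n)"

definition binary_digit :: "real \<Rightarrow> nat \<Rightarrow> bool" where
  "binary_digit r n \<longleftrightarrow> dyadic_approx r n + (1/2)^Suc n \<le> r"

lemma dyadic_approx_eq_sum:
  "dyadic_approx r n = (\<Sum>j\<in>{j. j < n \<and> binary_digit r j}. (1/2)^Suc j)"
proof (induction n)
  case (Suc n)
  have "{j. j < Suc n \<and> binary_digit r j}
          = (if binary_digit r n then insert n else id) {j. j < n \<and> binary_digit r j}"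
    by (auto simp: less_Suc_eq)
  then show ?case
    using Suc by (simp add: binary_digit_def)
qed simp

lemma dyadic_approx_bounds:
  assumes "0 \<le> r" "r < 1"
  shows "dyadic_approx r n \<le> r" "r < dyadic_approx r n + (1/2)^n"
proof -
  have "dyadic_approx r n \<le> r \<and> r < dyadic_approx r n + (1/2)^n"
  proof (induction n)
    case (Suc n)
    have "(1/2::real)^n = 2 * (1/2)^Suc n" by simp
    then show ?case using Suc by (auto simp del: power_Suc)
  qed (use assms in simp)
  then show "dyadic_approx r n \<le> r" "r < dyadic_approx r n + (1/2)^n" by auto
qed

lemma LIMSEQ_dyadic_approx:
  assumes "0 \<le> r" "r < 1"
  shows "dyadic_approx r \<longlonglongrightarrow> r"
proof (rule tendsto_sandwich)
  have "(\<lambda>n. r - (1/2::real)^n) \<longlonglongrightarrow> r - 0"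
    by (intro tendsto_diff tendsto_const LIMSEQ_power_zero) simp
  then show "(\<lambda>n. r - (1/2::real)^n) \<longlonglongrightarrow> r" by simp
  show "\<forall>\<^sub>F n in sequentially. r - (1/2)^n \<le> dyadic_approx r n"
    using dyadic_approx_bounds(2)[OF assms] by (intro always_eventually allI) (smt (verit))
  show "\<forall>\<^sub>F n in sequentially. dyadic_approx r n \<le> r"
    using dyadic_approx_bounds(1)[OF assms] by simp
qed simp

definition block :: "nat \<Rightarrow> nat \<Rightarrow> nat \<Rightarrow> (nat \<Rightarrow> bool) set" where
  "block k n j = cyl (\<lambda>i. i < k \<or> i = 2*k+2+n \<or> i = 2*k+3+n+j) (2*k+4+n+j)"

lemma mem_block:
  "y \<in> block k n j \<longleftrightarrow> (\<forall>i < 2*k+4+n+j. y i \<longleftrightarrow> i < k \<or> i = 2*k+2+n \<or> i = 2*k+3+n+j)"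
  by (simp add: block_def cyl_def)

lemma open_block: "open (block k n j)"
  by (simp add: block_def open_cyl)

lemma measure_block: "measure coin_measure (block k n j) = (1/2)^(2*k+4+n+j)"
  by (simp add: block_def measure_cyl)

lemma block_first_zero:
  assumes "y \<in> block k' n j" "\<forall>i<k. y i" "\<not> y k"
  shows "k' = k"
proof (rule ccontr)
  assume "k' \<noteq> k"
  then consider "k' < k" | "k < k'" by linarith
  then show False
  proof cases
    case 1
    then have "\<not> y k'" using assms(1) by (simp add: mem_block)
    with 1 assms(2) show False by blast
  next
    case 2
    then have "y k" using assms(1) by (simp add: mem_block)
    with assms(3) show False by blast
  qed
qed

lemma block_second_one:
  assumes "y \<in> block k n' j" "\<forall>i. 2*k+2 \<le> i \<and> i < 2*k+2+n \<longrightarrow> \<not> y i" "y (2*k+2+n)"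
  shows "n' = n"
proof (rule ccontr)
  assume "n' \<noteq> n"
  then consider "n' < n" | "n < n'" by linarith
  then show False
  proof cases
    case 1
    then have "y (2*k+2+n')" using assms(1) by (simp add: mem_block)
    with 1 assms(2) show False by simp
  next
    case 2
    then have "\<not> y (2*k+2+n)" using assms(1) by (simp add: mem_block)
    with assms(3) show False by blast
  qed
qed

lemma block_disjoint: "j \<noteq> j' \<Longrightarrow> block k n j \<inter> block k n j' = {}"
proof -
  have "j \<le> j'" if "y \<in> block k n j" "y \<in> block k n j'" for y j j'
  proof (rule ccontr)
    assume "\<not> j \<le> j'"
    then have "\<not> y (2*k+3+n+j')"
      using that(1) by (simp add: mem_block)
    moreover have "y (2*k+3+n+j')"
      using that(2) by (simp add: mem_block)
    ultimately show False by blast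
  qed
  then show "j \<noteq> j' \<Longrightarrow> block k n j \<inter> block k n j' = {}"
    by (meson disjoint_iff le_antisym)
qed

definition witness_set :: "real set \<Rightarrow> (nat \<Rightarrow> bool) set" where
  "witness_set S = cyl (\<lambda>i. i = 1) 2 \<union>
     (\<Union>r\<in>S. \<Union>n. \<Union>j\<in>{j. j < n \<and> binary_digit r j}. block (to_nat_on S r) n j)"

lemma mem_witness_set:
  "y \<in> witness_set S \<longleftrightarrow> (\<not> y 0 \<and> y 1) \<or>
     (\<exists>r\<in>S. \<exists>n j. j < n \<and> binary_digit r j \<and> y \<in> block (to_nat_on S r) n j)"
  by (auto simp: witness_set_def cyl_def numeral_2_eq_2 less_Suc_eq)

lemma open_witness_set: "open (witness_set S)"
  unfolding witness_set_def by (intro open_Un open_UN ballI allI open_cyl open_block)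

lemma witness_set_blockE:
  assumes "y \<in> witness_set S" "y 0 \<or> \<not> y 1"
  obtains r n j where "r \<in> S" "j < n" "binary_digit r j" "y \<in> block (to_nat_on S r) n j"
  using assms that by (auto simp: mem_witness_set)

lemma witness_set_inter_stair_sibling:
  assumes "countable S" "r \<in> S" "to_nat_on S r = k"
  shows "witness_set S \<inter> cyl ((\<lambda>i. i < k)(2*k+2+n := True)) (2*k+3+n)
           = (\<Union>j\<in>{j. j < n \<and> binary_digit r j}. block k n j)"
    (is "_ \<inter> ?C = ?U")
proof (intro equalityI subsetI)
  fix y assume y: "y \<in> witness_set S \<inter> ?C"
  then have y_eq: "y i \<longleftrightarrow> i < k \<or> i = 2*k+2+n" if "i < 2*k+3+n" for i
    using that by (auto simp: cyl_def)
  have "y 0 \<or> \<not> y 1"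
    using y_eq[of 0] y_eq[of 1] by auto
  with y obtain r' n' j' where r': "r' \<in> S" "j' < n'" "binary_digit r' j'"
    and y_block: "y \<in> block (to_nat_on S r') n' j'"
    by (auto elim: witness_set_blockE)
  have "to_nat_on S r' = k"
    by (rule block_first_zero[OF y_block]) (use y_eq in auto)
  then have "r' = r"
    using inj_on_to_nat_on[OF assms(1)] r'(1) assms(2,3) by (auto dest: inj_onD)
  have "n' = n"
    by (rule block_second_one[of y k]) (use y_block \<open>to_nat_on S r' = k\<close> y_eq in auto)
  then show "y \<in> ?U"
    using r' y_block \<open>r' = r\<close> \<open>to_nat_on S r' = k\<close> by auto
next
  fix y assume "y \<in> ?U"
  then obtain j where j: "j < n" "binary_digit r j" "y \<in> block k n j" by auto
  then have "y \<in> witness_set S"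
    using assms(2,3) by (auto simp: mem_witness_set)
  moreover have "y \<in> ?C"
    using j(3) by (auto simp: mem_block cyl_def)
  ultimately show "y \<in> witness_set S \<inter> ?C" by blast
qed

lemma density_ratio_stair_sibling:
  assumes "countable S" "r \<in> S" "to_nat_on S r = k"
  shows "density_ratio (witness_set S) ((\<lambda>i. i < k)(2*k+2+n := True)) (2*k+3+n)
           = dyadic_approx r n"
proof -
  let ?J = "{j. j < n \<and> binary_digit r j}"
  have "measure coin_measure (\<Union>j\<in>?J. block k n j) = (\<Sum>j\<in>?J. (1/2)^(2*k+4+n+j))"
    by (subst coin.finite_measure_finite_Union)
       (auto simp: measure_block disjoint_family_on_def block_disjoint
             intro: open_in_sets_coin_measure open_block)
  also have "\<dots> = (1/2)^(2*k+3+n) * dyadic_approx r n"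
    unfolding dyadic_approx_eq_sum sum_distrib_left
  proof (intro sum.cong refl)
    fix j
    have "2*k+4+n+j = (2*k+3+n) + Suc j"
      by simp
    then show "(1/2::real)^(2*k+4+n+j) = (1/2)^(2*k+3+n) * (1/2)^Suc j"
      by (simp only: power_add)
  qed
  finally show ?thesis
    using witness_set_inter_stair_sibling[OF assms] by (simp add: density_ratio_def measure_cyl)
qed

lemma density_at_witness_set_stair:
  assumes "countable S" "S \<subseteq> {0<..<1}" "r \<in> S"
  shows "density_at (witness_set S) (\<lambda>i. i < to_nat_on S r) r"
proof (rule density_at_of_siblings)
  show "witness_set S \<in> sets coin_measure"
    by (rule open_in_sets_coin_measure[OF open_witness_set])
  define k where "k = to_nat_on S r"
  let ?z = "\<lambda>i. i < k"
  define s where "s m = density_ratio (witness_set S) (?z(m := \<not> ?z m)) (Suc m)" for m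
  have "s (n + (2*k+2)) = dyadic_approx r n" for n
  proof -
    have "n + (2*k+2) = 2*k+2+n" "Suc (n + (2*k+2)) = 2*k+3+n"
      by simp_all
    moreover have "?z(2*k+2+n := \<not> ?z (2*k+2+n)) = ?z(2*k+2+n := True)"
      by simp
    ultimately show ?thesis
      using density_ratio_stair_sibling[OF assms(1,3) k_def[symmetric], of n] by (simp only: s_def)
  qed
  moreover have "dyadic_approx r \<longlonglongrightarrow> r"
    using assms(2,3) by (intro LIMSEQ_dyadic_approx) auto
  ultimately have "(\<lambda>n. s (n + (2*k+2))) \<longlonglongrightarrow> r"
    by simp
  then show "s \<longlonglongrightarrow> r"
    by (rule LIMSEQ_offset)
qed

lemma witness_set_inter_ones_sibling:
  assumes "1 \<le> m"
  shows "witness_set S \<inter> cyl (\<lambda>i. i < m) (Suc m) \<subseteq> cyl (\<lambda>i. i < m) (2*m+2)"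
proof
  fix y assume y: "y \<in> witness_set S \<inter> cyl (\<lambda>i. i < m) (Suc m)"
  then have y_eq: "y i \<longleftrightarrow> i < m" if "i \<le> m" for i
    using that by (auto simp: cyl_def)
  have "y 0"
    using y_eq[of 0] assms by simp
  with y obtain r n j where y_block: "y \<in> block (to_nat_on S r) n j"
    by (auto elim: witness_set_blockE)
  have "to_nat_on S r = m"
    by (rule block_first_zero[OF y_block]) (use y_eq in auto)
  with y_block show "y \<in> cyl (\<lambda>i. i < m) (2*m+2)"
    by (auto simp: mem_block cyl_def)
qed

lemma density_at_witness_set_ones: "density_at (witness_set S) (\<lambda>_. True) 0"
proof (rule density_at_of_siblings)
  show "witness_set S \<in> sets coin_measure"
    by (rule open_in_sets_coin_measure[OF open_witness_set])
  define s where "s m = density_ratio (witness_set S) ((\<lambda>_. True)(m := False)) (Suc m)" for m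
  have "s m \<le> (1/2)^Suc m" if "1 \<le> m" for m
  proof -
    have "cyl ((\<lambda>_. True)(m := False)) (Suc m) = cyl (\<lambda>i. i < m) (Suc m)"
      by (rule cyl_cong) auto
    then have "measure coin_measure (witness_set S \<inter> cyl ((\<lambda>_. True)(m := False)) (Suc m))
        \<le> measure coin_measure (cyl (\<lambda>i. i < m) (2*m+2))"
      using witness_set_inter_ones_sibling[OF that, of S]
      by (intro coin.finite_measure_mono) (auto intro: open_in_sets_coin_measure open_cyl)
    moreover have "2*m+2 = Suc m + Suc m"
      by simp
    ultimately show ?thesis
      by (simp only: s_def density_ratio_def measure_cyl power_add) (simp add: field_simps)
  qed
  then have "\<forall>\<^sub>F m in sequentially. norm (s m) \<le> (1/2)^Suc m"
    using density_ratio_bounds(1) unfolding s_def eventually_sequentially by auto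
  moreover have "(\<lambda>m. (1/2::real)^Suc m) \<longlonglongrightarrow> 0"
    by (intro LIMSEQ_power_zero[THEN LIMSEQ_Suc]) simp
  ultimately have "s \<longlonglongrightarrow> 0"
    by (rule Lim_null_comparison)
  then show "(\<lambda>m. density_ratio (witness_set S) ((\<lambda>_. True)(m := \<not> True)) (Suc m)) \<longlonglongrightarrow> 0"
    by (simp add: s_def[abs_def])
qed

lemma witness_set_frontier_first_zero:
  assumes "z \<notin> witness_set S" "\<And>m. cyl z m \<inter> witness_set S \<noteq> {}" "\<forall>i<k. z i" "\<not> z k"
  obtains r where "r \<in> S" "to_nat_on S r = k" "\<forall>i. k \<le> i \<and> i < 2*k+2 \<longrightarrow> \<not> z i"
proof -
  obtain y where y: "y \<in> witness_set S" and agree: "\<forall>i<2*k+2. y i = z i"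
    using assms(2)[of "2*k+2"] by (auto simp: cyl_def)
  have "y 0 \<or> \<not> y 1"
    using assms(1) agree by (auto simp: mem_witness_set)
  with y obtain r n j where "r \<in> S" and y_block: "y \<in> block (to_nat_on S r) n j"
    by (auto elim: witness_set_blockE)
  moreover have k: "to_nat_on S r = k"
    by (rule block_first_zero[OF y_block]) (use agree assms(3,4) in auto)
  moreover have "\<forall>i. k \<le> i \<and> i < 2*k+2 \<longrightarrow> \<not> z i"
    using y_block agree unfolding k by (auto simp: mem_block)
  ultimately show thesis
    using that by blast
qed

lemma witness_set_frontier_no_later_one:
  assumes "z \<notin> witness_set S" "\<And>m. cyl z m \<inter> witness_set S \<noteq> {}" "\<forall>i<k. z i" "\<not> z k"
    and zeros: "\<forall>i. 2*k+2 \<le> i \<and> i < 2*k+2+n \<longrightarrow> \<not> z i"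
  shows "\<not> z (2*k+2+n)"
proof
  assume one: "z (2*k+2+n)"
  obtain y where y: "y \<in> witness_set S" and agree: "\<forall>i<2*k+3+2*n. y i = z i"
    using assms(2)[of "2*k+3+2*n"] by (auto simp: cyl_def)
  have "y 0 \<or> \<not> y 1"
    using assms(1) agree by (auto simp: mem_witness_set)
  with y obtain r n' j where r: "r \<in> S" "j < n'" "binary_digit r j"
    and y_block: "y \<in> block (to_nat_on S r) n' j"
    by (auto elim: witness_set_blockE)
  have k: "to_nat_on S r = k"
    by (rule block_first_zero[OF y_block]) (use agree assms(3,4) in auto)
  have "n' = n"
    by (rule block_second_one[OF y_block[unfolded k]]) (use agree zeros one in auto)
  \<comment> \<open>since \<open>j < n\<close>, the block of \<open>y\<close> ends within the prefix shared with \<open>z\<close>\<close>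
  with y_block agree r(2) have "z \<in> block (to_nat_on S r) n' j"
    unfolding k by (auto simp: mem_block)
  with r have "z \<in> witness_set S"
    by (auto simp: mem_witness_set)
  with assms(1) show False ..
qed

lemma frontier_witness_set:
  assumes "z \<in> closure (witness_set S)" "z \<notin> witness_set S"
  shows "z = (\<lambda>_. True) \<or> (\<exists>r\<in>S. z = (\<lambda>i. i < to_nat_on S r))"
proof (cases "\<forall>i. z i")
  case True
  then show ?thesis by auto
next
  case False
  define k where "k = (LEAST i. \<not> z i)"
  have first_zero: "\<forall>i<k. z i" "\<not> z k"
    using not_less_Least LeastI_ex[of "\<lambda>i. \<not> z i"] False unfolding k_def by auto
  note meets = closure_imp_cyl_Int_nonempty[OF assms(1)]
  obtain r where r: "r \<in> S" "to_nat_on S r = k" and gap: "\<forall>i. k \<le> i \<and> i < 2*k+2 \<longrightarrow> \<not> z i"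
    using witness_set_frontier_first_zero[OF assms(2) meets first_zero] .
  have tail: "\<not> z (2*k+2+n)" for n
  proof (induction n rule: less_induct)
    case (less n)
    have "\<forall>i. 2*k+2 \<le> i \<and> i < 2*k+2+n \<longrightarrow> \<not> z i"
      using less.IH by (metis add_less_cancel_left le_Suc_ex)
    then show ?case
      by (rule witness_set_frontier_no_later_one[OF assms(2) meets first_zero])
  qed
  have "z = (\<lambda>i. i < k)"
  proof
    fix i
    show "z i = (i < k)"
    proof (cases "i < 2*k+2")
      case True
      then show ?thesis
        using first_zero(1) gap by (cases "i < k") auto
    next
      case False
      then have "i = 2*k+2 + (i - (2*k+2))"
        by simp
      then have "\<not> z i"
        using tail[of "i - (2*k+2)"] by metis
      with False show ?thesis
        by simp
    qed
  qed
  with r show ?thesis by auto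
qed

lemma density_at_witness_set_cases:
  "density_at (witness_set S) z 1 \<or> density_at (witness_set S) z 0 \<or>
   (\<exists>r\<in>S. z = (\<lambda>i. i < to_nat_on S r))"
proof -
  have "interior (witness_set S) = witness_set S"
    by (rule interior_open[OF open_witness_set])
  then show ?thesis
    using density_at_interior[of z "witness_set S"] density_at_exterior[of z "witness_set S"]
      frontier_witness_set[of z S] density_at_witness_set_ones[of S]
    by metis
qed

definition realizes_densities :: "real set \<Rightarrow> (nat \<Rightarrow> bool) set \<Rightarrow> bool" where
  "realizes_densities S A \<longleftrightarrow>
     solid A \<and> density_range A = S \<union> {0, 1} \<and> (\<forall>r\<in>S. \<exists>!z. density_at A z r)"

lemma realizes_densities_witness_set:
  assumes "countable S" "S \<subseteq> {0<..<1}"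
  shows "realizes_densities S (witness_set S)"
proof -
  let ?A = "witness_set S"
  note stair = density_at_witness_set_stair[OF assms]
  have density_values: "\<exists>d\<in>S \<union> {0, 1}. density_at ?A z d" for z
    using density_at_witness_set_cases[of S z] stair by blast
  have solid: "solid ?A"
    unfolding solid_def using density_values by blast
  have "(\<lambda>i. i = 1) \<in> interior ?A"
    by (simp add: interior_open[OF open_witness_set] mem_witness_set)
  then have "1 \<in> density_range ?A"
    unfolding density_range_def by (blast intro: density_at_interior)
  moreover have "0 \<in> density_range ?A"
    unfolding density_range_def by (blast intro: density_at_witness_set_ones)
  moreover have "S \<subseteq> density_range ?A"
    unfolding density_range_def by (blast intro: stair)
  moreover have "density_range ?A \<subseteq> S \<union> {0, 1}"
    unfolding density_range_def using density_values density_at_unique by blast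
  ultimately have range: "density_range ?A = S \<union> {0, 1}"
    by blast
  have uniq: "z = (\<lambda>i. i < to_nat_on S r)" if r: "r \<in> S" and z: "density_at ?A z r" for r z
  proof -
    have "r \<noteq> 0" "r \<noteq> 1"
      using assms(2) r by auto
    then obtain r' where "r' \<in> S" "z = (\<lambda>i. i < to_nat_on S r')"
      using density_at_witness_set_cases[of S z] density_at_unique z by metis
    moreover from this have "r' = r"
      using stair density_at_unique z by metis
    ultimately show ?thesis by simp
  qed
  have "\<exists>!z. density_at ?A z r" if "r \<in> S" for r
    using stair[OF that] uniq[OF that] by blast
  with solid range show ?thesis
    unfolding realizes_densities_def by blast
qed

lemma realizes_densities_Compl:
  assumes "A \<in> sets coin_measure" "realizes_densities S A"
  shows "realizes_densities ((\<lambda>r. 1 - r) ` S) (- A)"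
proof -
  note Compl = density_at_Compl[OF assms(1)]
  have "d \<in> density_range (- A) \<longleftrightarrow> 1 - d \<in> density_range A" for d
    unfolding density_range_def Compl by simp
  then have "d \<in> density_range (- A) \<longleftrightarrow> 1 - d \<in> S \<union> {0, 1}" for d
    using assms(2) unfolding realizes_densities_def by blast
  moreover have "1 - d \<in> S \<longleftrightarrow> d \<in> (\<lambda>r. 1 - r) ` S" for d
    by force
  ultimately have "density_range (- A) = (\<lambda>r. 1 - r) ` S \<union> {0, 1}"
    by auto
  moreover have "solid (- A)"
    unfolding solid_def Compl
  proof
    fix z
    obtain d where "density_at A z d"
      using assms(2) unfolding realizes_densities_def solid_def by blast
    then show "\<exists>d. density_at A z (1 - d)"
      by (intro exI[of _ "1 - d"]) simp
  qed
  moreover have "\<forall>r\<in>(\<lambda>r. 1 - r) ` S. \<exists>!z. density_at (- A) z r"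
    using assms(2) by (auto simp: realizes_densities_def Compl)
  ultimately show ?thesis
    unfolding realizes_densities_def by blast
qed

theorem theorem3p11:
  fixes S :: "real set"
  assumes "countable S" and "S \<subseteq> {0<..<1}"
  shows "(\<exists>A :: (nat \<Rightarrow> bool) set. open A \<and> solid A \<and>
            density_range A = S \<union> {0, 1} \<and>
            (\<forall>r\<in>S. \<exists>!z. density_at A z r))
       \<and> (\<exists>A :: (nat \<Rightarrow> bool) set. closed A \<and> solid A \<and>
            density_range A = S \<union> {0, 1} \<and>
            (\<forall>r\<in>S. \<exists>!z. density_at A z r))"
proof
  show "\<exists>A. open A \<and> solid A \<and> density_range A = S \<union> {0, 1} \<and> (\<forall>r\<in>S. \<exists>!z. density_at A z r)"
    using open_witness_set realizes_densities_witness_set[OF assms]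
    unfolding realizes_densities_def by blast
next
  let ?S' = "(\<lambda>r. 1 - r) ` S"
  have "countable ?S'" "?S' \<subseteq> {0<..<1}"
    using assms by auto
  then have "realizes_densities ((\<lambda>r. 1 - r) ` ?S') (- witness_set ?S')"
    by (intro realizes_densities_Compl realizes_densities_witness_set
        open_in_sets_coin_measure open_witness_set)
  moreover have "(\<lambda>r. 1 - r) ` ?S' = S"
    by (simp add: image_image)
  moreover have "closed (- witness_set ?S')"
    using open_witness_set by blast
  ultimately show "\<exists>A. closed A \<and> solid A \<and> density_range A = S \<union> {0, 1} \<and> (\<forall>r\<in>S. \<exists>!z. density_at A z r)"
    unfolding realizes_densities_def by metis
qed

end
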